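(* Let $n\ge 2$ and let $(x_1,\dots,x_n)\in A_n$ be a point at which $S_n$ attains its maximum over $A_n$. Then $x_1-x_2\le 1$.
   Context: For an integer $n\ge 2$, $A_n$ is the set of integer vectors $(x_1,\dots,x_n)\in\mathbb{Z}^n$ such that $n\ge x_1\ge x_2\ge\cdots\ge x_n\ge 0$, $\sum_{i=1}^k x_i\le 2n+6k-16$ for every $k\in\{1,\dots,n\}$, and $\sum_{i=1}^n x_i\le 6n-12$. For an integer $m\ge 2$, $S_m:\mathbb{R}^m\to\mathbb{R}$ is defined by $S_m(x_1,\dots,x_m)=\sum_{i=1}^{m-1}\sum_{j=i+1}^{m} x_i x_j^2$. *)

theory Defs
  imports Complex_Main
begin

text \<open>Vectors in Z^n are represented as functions nat => int indexed by 1..n,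
  with value 0 outside {1..n} (so that A n is in bijection with the set in the paper).\<close>

definition A :: "nat \<Rightarrow> (nat \<Rightarrow> int) set" where
  "A n = {x. (\<forall>i. i \<notin> {1..n} \<longrightarrow> x i = 0)
            \<and> x 1 \<le> int n
            \<and> (\<forall>i\<in>{1..<n}. x i \<ge> x (Suc i))
            \<and> x n \<ge> 0
            \<and> (\<forall>k\<in>{1..n}. (\<Sum>i=1..k. x i) \<le> 2 * int n + 6 * int k - 16)
            \<and> (\<Sum>i=1..n. x i) \<le> 6 * int n - 12}"

definition S :: "nat \<Rightarrow> (nat \<Rightarrow> real) \<Rightarrow> real" where
  "S m x = (\<Sum>i=1..m-1. \<Sum>j=i+1..m. x i * (x j)^2)"

end

theory Submission
  imports Defs
begin

text \<open>If \<open>x\<^sub>1 \<ge> x\<^sub>2 + 2\<close>, moving one unit from \<open>x\<^sub>1\<close> to \<open>x\<^sub>2\<close> keeps the vector in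
  \<open>A\<^sub>n\<close>: monotonicity survives, and every prefix sum is unchanged except the first, which
  drops. In \<open>S\<^sub>n\<close> the only term not depending on \<open>x\<^sub>1 + x\<^sub>2\<close> alone is \<open>x\<^sub>1 x\<^sub>2\<^sup>2\<close>, and
  \<open>(x\<^sub>1 - 1)(x\<^sub>2 + 1)\<^sup>2 > x\<^sub>1 x\<^sub>2\<^sup>2\<close>, so the move strictly increases \<open>S\<^sub>n\<close>.\<close>

lemma S_Suc:
  "S (Suc (Suc k)) f = S (Suc k) f + (\<Sum>i=1..Suc k. f i) * (f (Suc (Suc k)))^2"
proof -
  have "S (Suc (Suc k)) f = (\<Sum>i=1..Suc k. \<Sum>j=i+1..Suc (Suc k). f i * (f j)^2)"
    by (simp add: S_def)
  also have "\<dots> = (\<Sum>i=1..Suc k. (\<Sum>j=i+1..Suc k. f i * (f j)^2) + f i * (f (Suc (Suc k)))^2)"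
    by (rule sum.cong) (auto simp: sum.cl_ivl_Suc)
  also have "\<dots> = S (Suc k) f + (\<Sum>i=1..Suc k. f i) * (f (Suc (Suc k)))^2"
    by (simp only: sum.distrib sum_distrib_right) (simp add: S_def sum.cl_ivl_Suc)
  finally show ?thesis .
qed

lemma sum_atLeast1_eq_if_agree_off_12:
  fixes f g :: "nat \<Rightarrow> 'a::comm_monoid_add"
  assumes "\<And>i. i \<noteq> 1 \<Longrightarrow> i \<noteq> 2 \<Longrightarrow> g i = f i" "g 1 + g 2 = f 1 + f 2" "2 \<le> k"
  shows "(\<Sum>i=1..k. g i) = (\<Sum>i=1..k. f i)"
  using assms(3)
proof (induction k rule: dec_induct)
  case base
  then show ?case using assms(2) by (simp add: numeral_2_eq_2)
next
  case (step k)
  then show ?case using assms(1)[of "Suc k"] by (simp add: sum.cl_ivl_Suc)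
qed

lemma S_diff_if_agree_off_12:
  fixes f g :: "nat \<Rightarrow> real"
  assumes "\<And>i. i \<noteq> 1 \<Longrightarrow> i \<noteq> 2 \<Longrightarrow> g i = f i" "g 1 + g 2 = f 1 + f 2" "2 \<le> m"
  shows "S m g - S m f = g 1 * (g 2)^2 - f 1 * (f 2)^2"
  using assms(3)
proof (induction m rule: dec_induct)
  case base
  then show ?case by (simp add: S_def numeral_2_eq_2)
next
  case (step k)
  then obtain j where k: "k = Suc j" by (cases k) auto
  have "(\<Sum>i=1..k. g i) = (\<Sum>i=1..k. f i)"
    using assms(1,2) step(1) by (rule sum_atLeast1_eq_if_agree_off_12)
  moreover have "g (Suc k) = f (Suc k)"
    using step(1) by (intro assms(1)) auto
  ultimately show ?case
    using step(3) unfolding k S_Suc by (simp add: algebra_simps)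
qed

lemma A_antitone:
  assumes "x \<in> A n" "1 \<le> i" "i \<le> j" "j \<le> n"
  shows "x j \<le> x i"
  using assms(3,4)
proof (induction j rule: dec_induct)
  case (step k)
  then have "x (Suc k) \<le> x k"
    using assms(1,2) by (auto simp: A_def)
  with step show ?case by simp
qed simp

lemma A_nonneg:
  assumes "x \<in> A n" "1 \<le> i" "i \<le> n"
  shows "0 \<le> x i"
  using A_antitone[OF assms] assms(1) by (auto simp: A_def)

lemma move_unit_1_to_2_in_A:
  assumes "x \<in> A n" "n \<ge> 2" "x 2 + 2 \<le> x 1"
  shows "x(1 := x 1 - 1, 2 := x 2 + 1) \<in> A n" (is "?y \<in> A n")
proof -
  have sums: "(\<Sum>i=1..k. ?y i) = (\<Sum>i=1..k. x i)" if "2 \<le> k" for k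
    using that by (intro sum_atLeast1_eq_if_agree_off_12) auto
  have steps: "?y (Suc i) \<le> ?y i" if "i \<in> {1..<n}" for i
  proof (cases "i = 1")
    case False
    then have "2 \<le> i" using that by auto
    moreover have "x (Suc i) \<le> x i" "x (Suc i) \<le> x 2"
      using that \<open>2 \<le> i\<close> assms(1) A_antitone[OF assms(1), of 2 "Suc i"] by (auto simp: A_def)
    ultimately show ?thesis
      by (cases "i = 2") (auto simp: numeral_2_eq_2)
  qed (use assms(3) in \<open>simp add: numeral_2_eq_2\<close>)
  have prefix: "(\<Sum>i=1..k. ?y i) \<le> 2 * int n + 6 * int k - 16" if "k \<in> {1..n}" for k
  proof (cases "k = 1")
    case True
    then show ?thesis using assms(1) that by (force simp: A_def)
  next
    case False
    then show ?thesis using assms(1) that sums[of k] by (auto simp: A_def)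
  qed
  have "0 \<le> ?y n"
    using A_nonneg[OF assms(1), of n] A_nonneg[OF assms(1), of 2] assms(2)
    by (cases "n = 2") auto
  then show ?thesis
    using assms steps prefix sums[of n] unfolding A_def by auto
qed

lemma move_unit_1_to_2_gain:
  fixes a b :: int
  assumes "0 \<le> b" "b + 2 \<le> a"
  shows "a * b^2 < (a - 1) * (b + 1)^2"
proof -
  have "(a - 1) * (b + 1)^2 - a * b^2 = 2 * a * b + a - b^2 - 2 * b - 1"
    by (simp add: algebra_simps power2_eq_square)
  moreover have "2 * (b + 2) * b \<le> 2 * a * b"
    using assms by (intro mult_right_mono) auto
  then have "2 * b * b + 4 * b \<le> 2 * a * b"
    by (simp add: algebra_simps)
  moreover have "0 \<le> b * b" using assms(1) by simp
  ultimately show ?thesis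
    using assms unfolding power2_eq_square by linarith
qed

theorem lemma6:
  fixes n :: nat and x :: "nat \<Rightarrow> int"
  assumes "n \<ge> 2"
    and "x \<in> A n"
    and "\<forall>y\<in>A n. S n (\<lambda>i. real_of_int (y i)) \<le> S n (\<lambda>i. real_of_int (x i))"
  shows "x 1 - x 2 \<le> 1"
proof (rule ccontr)
  assume "\<not> x 1 - x 2 \<le> 1"
  then have gap: "x 2 + 2 \<le> x 1" by simp
  define y where "y = x(1 := x 1 - 1, 2 := x 2 + 1)"
  have "y \<in> A n"
    unfolding y_def using assms(2,1) gap by (rule move_unit_1_to_2_in_A)
  have "S n (\<lambda>i. real_of_int (y i)) - S n (\<lambda>i. real_of_int (x i))
      = real_of_int (y 1 * (y 2)^2 - x 1 * (x 2)^2)"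
    by (subst S_diff_if_agree_off_12) (auto simp: y_def assms(1))
  moreover have "x 1 * (x 2)^2 < y 1 * (y 2)^2"
    unfolding y_def using move_unit_1_to_2_gain[OF A_nonneg[OF assms(2)] gap] assms(1) by simp
  ultimately have "S n (\<lambda>i. real_of_int (x i)) < S n (\<lambda>i. real_of_int (y i))"
    by (metis diff_gt_0_iff_gt of_int_0_less_iff)
  with assms(3) \<open>y \<in> A n\<close> show False by force
qed

end
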